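(* Let $\mathcal X,\mathcal Y$ be compact convex sets and $\mathcal L:\mathcal X\times\mathcal Y\to\mathbb R$ a differentiable convex-concave function with Lipschitz continuous gradient that is uniformly strongly convex-concave with constants $(\mu_{\mathcal X},\mu_{\mathcal Y})$, with saddle point $(x^*,y^* )$. Then $$M_{XY}\le\sqrt{\frac2{\mu_{\mathcal Y}}}L_{XY}D_{\mathcal X}\quad\text{and}\quad M_{YX}\le\sqrt{\frac2{\mu_{\mathcal X}}}L_{YX}D_{\mathcal Y}.$$
   Context: Norms $\|\cdot\|_{\mathcal X},\|\cdot\|_{\mathcal Y}$ with duals $\|\cdot\|_{\mathcal X^*},\|\cdot\|_{\mathcal Y^*}$; $D_{\mathcal X}:=\sup_{x,x'\in\mathcal X}\|x-x'\|_{\mathcal X}$, similarly $D_{\mathcal Y}$. Uniformly strongly convex-concave: $\mathcal L(\cdot,y)$ is $\mu_{\mathcal X}$-strongly convex for every $y$ and $-\mathcal L(x,\cdot)$ is $\mu_{\mathcal Y}$-strongly convex for every $x$, $\mu_{\mathcal X},\mu_{\mathcal Y}>0$. Saddle point: $\mathcal L(x^*,y)\le\mathcal L(x^*,y^* )\le\mathcal L(x,y^* )$; $\mathcal L^*:=\mathcal L(x^*,y^* )$. Partial Lipschitz constants: $\|\nabla_x\mathcal L(x,y)-\nabla_x\mathcal L(x,y')\|_{\mathcal X^*}\le L_{XY}\|y-y'\|_{\mathcal Y}$ and $\|\nabla_y\mathcal L(x,y)-\nabla_y\mathcal L(x',y)\|_{\mathcal Y^*}\le L_{YX}\|x-x'\|_{\mathcal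 X}$ for all $x,x',y,y'$. Bilinearity coefficients: $M_{XY}:=\sup\langle s-v,\frac{\nabla_x\mathcal L(x,y^* )-\nabla_x\mathcal L(x,y)}{\sqrt{\mathcal L^*-\mathcal L(x^*,y)}}\rangle$ over $y\in\mathcal Y\setminus\{y^*\}$, $x,s,v\in\mathcal X$; $M_{YX}:=\sup\langle s-v,\frac{\nabla_y\mathcal L(x,y)-\nabla_y\mathcal L(x^*,y)}{\sqrt{\mathcal L(x,y^* )-\mathcal L^*}}\rangle$ over $x\in\mathcal X\setminus\{x^*\}$, $y,s,v\in\mathcal Y$. *)

theory Defs
  imports "HOL-Analysis.Analysis"
begin

definition strongly_convex_on :: "'a::real_normed_vector set \<Rightarrow> real \<Rightarrow> ('a \<Rightarrow> real) \<Rightarrow> bool" where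
  "strongly_convex_on S mu f \<longleftrightarrow>
     (\<forall>x\<in>S. \<forall>x'\<in>S. \<forall>t::real. 0 \<le> t \<and> t \<le> 1 \<longrightarrow>
        f (t *\<^sub>R x + (1 - t) *\<^sub>R x') \<le> t * f x + (1 - t) * f x' - mu / 2 * t * (1 - t) * (norm (x - x'))\<^sup>2)"

text \<open>Partial gradients extracted from the joint derivative D x y :: 'a \<times> 'b \<Rightarrow> real.
  The pairing with the dual space is evaluation of the linear functional.\<close>
definition grad_x :: "('a::real_normed_vector \<Rightarrow> 'b::real_normed_vector \<Rightarrow> ('a \<times> 'b \<Rightarrow> real)) \<Rightarrow> 'a \<Rightarrow> 'b \<Rightarrow> 'a \<Rightarrow> real" where
  "grad_x D x y = (\<lambda>h. D x y (h, 0))"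

definition grad_y :: "('a::real_normed_vector \<Rightarrow> 'b::real_normed_vector \<Rightarrow> ('a \<times> 'b \<Rightarrow> real)) \<Rightarrow> 'a \<Rightarrow> 'b \<Rightarrow> 'b \<Rightarrow> real" where
  "grad_y D x y = (\<lambda>k. D x y (0, k))"

text \<open>Bilinearity coefficients (extended-real suprema; empty sup = -infinity).\<close>
definition M_XY :: "'a::real_normed_vector set \<Rightarrow> 'b::real_normed_vector set \<Rightarrow> ('a \<Rightarrow> 'b \<Rightarrow> real)
    \<Rightarrow> ('a \<Rightarrow> 'b \<Rightarrow> ('a \<times> 'b \<Rightarrow> real)) \<Rightarrow> 'a \<Rightarrow> 'b \<Rightarrow> ereal" where
  "M_XY X Y L D xs ys =
     (SUP (y, x, s, v) \<in> (Y - {ys}) \<times> X \<times> X \<times> X.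
        ereal ((grad_x D x ys (s - v) - grad_x D x y (s - v)) / sqrt (L xs ys - L xs y)))"

definition M_YX :: "'a::real_normed_vector set \<Rightarrow> 'b::real_normed_vector set \<Rightarrow> ('a \<Rightarrow> 'b \<Rightarrow> real)
    \<Rightarrow> ('a \<Rightarrow> 'b \<Rightarrow> ('a \<times> 'b \<Rightarrow> real)) \<Rightarrow> 'a \<Rightarrow> 'b \<Rightarrow> ereal" where
  "M_YX X Y L D xs ys =
     (SUP (x, y, s, v) \<in> (X - {xs}) \<times> Y \<times> Y \<times> Y.
        ereal ((grad_y D x y (s - v) - grad_y D xs y (s - v)) / sqrt (L x ys - L xs ys)))"

end

theory Submission
  imports Defs
begin

text \<open>Strong concavity of \<open>L xs\<close> together with maximality of \<open>ys\<close> gives quadratic growth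
  \<open>L xs ys - L xs y \<ge> \<mu>\<^sub>Y/2 \<parallel>y - ys\<parallel>\<^sup>2\<close>, so the denominator in \<open>M_XY\<close> is at least
  \<open>sqrt (\<mu>\<^sub>Y/2) \<parallel>y - ys\<parallel>\<close>. The numerator is the gradient difference applied to \<open>s - v\<close>,
  hence at most \<open>L\<^sub>X\<^sub>Y \<parallel>y - ys\<parallel> D\<^sub>X\<close>; the factor \<open>\<parallel>y - ys\<parallel>\<close> cancels.\<close>

lemma strongly_convex_on_quadratic_growth:
  fixes S :: "'a::real_normed_vector set"
  assumes sc: "strongly_convex_on S mu f" and "convex S" and "mu > 0"
    and a: "a \<in> S" and b: "b \<in> S" and min: "\<And>z. z \<in> S \<Longrightarrow> f a \<le> f z"
  shows "mu / 2 * (norm (b - a))\<^sup>2 \<le> f b - f a"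
proof (rule ccontr)
  define c where "c = mu / 2 * (norm (b - a))\<^sup>2"
  define A where "A = f b - f a"
  assume "\<not> ?thesis"
  hence "A < c" unfolding A_def c_def by simp
  moreover have "A \<ge> 0" using min[OF b] unfolding A_def by simp
  ultimately have "c > 0" by simp
  \<comment> \<open>this choice of \<open>t\<close> makes the strong convexity estimate at \<open>t b + (1 - t) a\<close> beat \<open>f a\<close>\<close>
  define t where "t = (c - A) / (2 * c)"
  have t0: "0 < t" and t1: "t \<le> 1"
    using \<open>A < c\<close> \<open>c > 0\<close> \<open>A \<ge> 0\<close> unfolding t_def by (simp_all add: field_simps)
  have z: "t *\<^sub>R b + (1 - t) *\<^sub>R a \<in> S"
    using \<open>convex S\<close> a b t0 t1 by (simp add: convex_def)
  have "f (t *\<^sub>R b + (1 - t) *\<^sub>R a)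
      \<le> t * f b + (1 - t) * f a - mu / 2 * t * (1 - t) * (norm (b - a))\<^sup>2"
    using sc a b t0 t1 unfolding strongly_convex_on_def by auto
  moreover have "mu / 2 * t * (1 - t) * (norm (b - a))\<^sup>2 = t * (1 - t) * c"
    unfolding c_def by (simp only: ac_simps)
  ultimately have "f a \<le> t * f b + (1 - t) * f a - t * (1 - t) * c"
    using min[OF z] by linarith
  hence "t * (1 - t) * c \<le> t * A" unfolding A_def by (simp add: algebra_simps)
  hence "(1 - t) * c \<le> A" using t0 by (simp add: mult.assoc)
  moreover have "(1 - t) * c = (c + A) / 2" using \<open>c > 0\<close> unfolding t_def by (simp add: field_simps)
  ultimately show False using \<open>A < c\<close> by simp
qed

lemma divide_sqrt_le_of_quadratic_growth:
  fixes N S K d mu :: real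
  assumes "N \<le> K * d" "K \<ge> 0" "d > 0" "mu > 0" "mu / 2 * d\<^sup>2 \<le> S"
  shows "N / sqrt S \<le> sqrt (2 / mu) * K"
proof -
  have "sqrt (mu / 2) * d \<le> sqrt S"
    using assms by (metis real_sqrt_le_mono real_sqrt_mult real_sqrt_abs abs_of_pos power2_eq_square)
  moreover have pos: "sqrt (mu / 2) * d > 0" using assms by simp
  ultimately have "sqrt S > 0" by linarith
  have "N / sqrt S \<le> K * d / sqrt S" using assms \<open>sqrt S > 0\<close> by (simp add: divide_right_mono)
  also have "\<dots> \<le> K * d / (sqrt (mu / 2) * d)"
    using pos \<open>sqrt S > 0\<close> \<open>sqrt (mu / 2) * d \<le> sqrt S\<close> assms by (intro divide_left_mono) auto
  also have "\<dots> = sqrt (2 / mu) * K" using assms by (simp add: field_simps real_sqrt_divide)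
  finally show ?thesis .
qed

text \<open>The common shape of \<open>M_XY\<close> and \<open>M_YX\<close>: \<open>G u w\<close> is a gradient difference whose operator
  norm is Lipschitz in \<open>u - u0\<close>, and \<open>gap u\<close> is the primal or dual gap at \<open>u\<close>.\<close>
lemma SUP_gradient_gap_ratio_le:
  fixes G :: "'u::real_normed_vector \<Rightarrow> 'w \<Rightarrow> 'v::real_normed_vector \<Rightarrow> real"
  assumes "bounded V" "mu > 0"
    and lin: "\<And>u w. u \<in> U - {u0} \<Longrightarrow> w \<in> W \<Longrightarrow> bounded_linear (G u w)"
    and lip: "\<And>u w. u \<in> U - {u0} \<Longrightarrow> w \<in> W \<Longrightarrow> onorm (G u w) \<le> K * norm (u - u0)"
    and growth: "\<And>u. u \<in> U - {u0} \<Longrightarrow> mu / 2 * (norm (u - u0))\<^sup>2 \<le> gap u"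
  shows "(SUP (u, w, s, v) \<in> (U - {u0}) \<times> W \<times> V \<times> V. ereal (G u w (s - v) / sqrt (gap u)))
           \<le> ereal (sqrt (2 / mu) * K * diameter V)"
proof (rule SUP_least)
  fix p assume "p \<in> (U - {u0}) \<times> W \<times> V \<times> V"
  then obtain u w s v where p: "p = (u, w, s, v)"
    and u': "u \<in> U - {u0}" and w: "w \<in> W" and sv: "s \<in> V" "v \<in> V"
    by auto
  have "norm (u - u0) > 0" using u' by simp
  have "0 \<le> K * norm (u - u0)" using lip[OF u' w] onorm_pos_le[OF lin[OF u' w]] by linarith
  with \<open>norm (u - u0) > 0\<close> have "K \<ge> 0" by (simp add: zero_le_mult_iff)
  have "norm (s - v) \<le> diameter V"
    using diameter_bounded_bound[OF \<open>bounded V\<close> sv] by (simp add: dist_norm)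
  have "G u w (s - v) \<le> onorm (G u w) * norm (s - v)" using onorm[OF lin[OF u' w], of "s - v"] by simp
  also have "\<dots> \<le> K * norm (u - u0) * diameter V"
    using lip[OF u' w] \<open>norm (s - v) \<le> diameter V\<close> onorm_pos_le[OF lin[OF u' w]]
    by (intro mult_mono) auto
  finally have "G u w (s - v) \<le> (K * diameter V) * norm (u - u0)" by (simp add: ac_simps)
  from divide_sqrt_le_of_quadratic_growth[OF this _ \<open>norm (u - u0) > 0\<close> \<open>mu > 0\<close> growth[OF u']]
  have "G u w (s - v) / sqrt (gap u) \<le> sqrt (2 / mu) * K * diameter V"
    using \<open>K \<ge> 0\<close> diameter_ge_0[OF \<open>bounded V\<close>] by (simp add: ac_simps)
  then show "(case p of (u, w, s, v) \<Rightarrow> ereal (G u w (s - v) / sqrt (gap u)))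
      \<le> ereal (sqrt (2 / mu) * K * diameter V)"
    by (simp add: p)
qed

lemma bounded_linear_grad_x:
  "bounded_linear (D x y) \<Longrightarrow> bounded_linear (grad_x D x y)"
  unfolding grad_x_def
  by (rule bounded_linear_compose[of "D x y" "\<lambda>h. (h, 0)"])
    (auto intro: bounded_linear_Pair bounded_linear_ident bounded_linear_zero)

lemma bounded_linear_grad_y:
  "bounded_linear (D x y) \<Longrightarrow> bounded_linear (grad_y D x y)"
  unfolding grad_y_def
  by (rule bounded_linear_compose[of "D x y" "\<lambda>k. (0, k)"])
    (auto intro: bounded_linear_Pair bounded_linear_ident bounded_linear_zero)

theorem proposition13:
  fixes X :: "'a::real_normed_vector set" and Y :: "'b::real_normed_vector set"
    and L :: "'a \<Rightarrow> 'b \<Rightarrow> real" and D :: "'a \<Rightarrow> 'b \<Rightarrow> ('a \<times> 'b \<Rightarrow> real)"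
    and xs :: 'a and ys :: 'b and muX muY LXY LYX :: real
  assumes "compact X" "convex X" "compact Y" "convex Y"
    and deriv: "\<And>x y. x \<in> X \<Longrightarrow> y \<in> Y \<Longrightarrow>
         ((\<lambda>p. L (fst p) (snd p)) has_derivative D x y) (at (x, y) within X \<times> Y)"
    and lip_grad: "\<exists>C. \<forall>x\<in>X. \<forall>x'\<in>X. \<forall>y\<in>Y. \<forall>y'\<in>Y.
         onorm (\<lambda>p. D x y p - D x' y' p) \<le> C * norm ((x, y) - (x', y'))"
    and "muX > 0" "muY > 0"
    and sc_x: "\<And>y. y \<in> Y \<Longrightarrow> strongly_convex_on X muX (\<lambda>x. L x y)"
    and sc_y: "\<And>x. x \<in> X \<Longrightarrow> strongly_convex_on Y muY (\<lambda>y. - L x y)"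
    and "xs \<in> X" "ys \<in> Y"
    and saddle: "\<And>x y. x \<in> X \<Longrightarrow> y \<in> Y \<Longrightarrow> L xs y \<le> L xs ys \<and> L xs ys \<le> L x ys"
    and LXY: "\<And>x y y'. x \<in> X \<Longrightarrow> y \<in> Y \<Longrightarrow> y' \<in> Y \<Longrightarrow>
         onorm (\<lambda>h. grad_x D x y h - grad_x D x y' h) \<le> LXY * norm (y - y')"
    and LYX: "\<And>x x' y. x \<in> X \<Longrightarrow> x' \<in> X \<Longrightarrow> y \<in> Y \<Longrightarrow>
         onorm (\<lambda>k. grad_y D x y k - grad_y D x' y k) \<le> LYX * norm (x - x')"
  shows "M_XY X Y L D xs ys \<le> ereal (sqrt (2 / muY) * LXY * diameter X)
       \<and> M_YX X Y L D xs ys \<le> ereal (sqrt (2 / muX) * LYX * diameter Y)"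
proof
  have D_lin: "bounded_linear (D x y)" if "x \<in> X" "y \<in> Y" for x y
    using has_derivative_bounded_linear[OF deriv[OF that]] .
  show "M_XY X Y L D xs ys \<le> ereal (sqrt (2 / muY) * LXY * diameter X)"
    unfolding M_XY_def
  proof (rule SUP_gradient_gap_ratio_le[where G = "\<lambda>y x h. grad_x D x ys h - grad_x D x y h"])
    show "muY / 2 * (norm (y - ys))\<^sup>2 \<le> L xs ys - L xs y" if "y \<in> Y - {ys}" for y
      using strongly_convex_on_quadratic_growth[OF sc_y[OF \<open>xs \<in> X\<close>] \<open>convex Y\<close> \<open>muY > 0\<close> \<open>ys \<in> Y\<close>]
        that saddle[OF \<open>xs \<in> X\<close>] by simp
    show "onorm (\<lambda>h. grad_x D x ys h - grad_x D x y h) \<le> LXY * norm (y - ys)"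
      if "y \<in> Y - {ys}" "x \<in> X" for y x
      using LXY[of x ys y] that \<open>ys \<in> Y\<close> by (simp add: norm_minus_commute)
  qed (use \<open>compact X\<close> \<open>muY > 0\<close> \<open>ys \<in> Y\<close> in \<open>auto simp: compact_imp_bounded
         intro!: bounded_linear_sub bounded_linear_grad_x D_lin\<close>)
  show "M_YX X Y L D xs ys \<le> ereal (sqrt (2 / muX) * LYX * diameter Y)"
    unfolding M_YX_def
  proof (rule SUP_gradient_gap_ratio_le[where G = "\<lambda>x y k. grad_y D x y k - grad_y D xs y k"])
    show "muX / 2 * (norm (x - xs))\<^sup>2 \<le> L x ys - L xs ys" if "x \<in> X - {xs}" for x
      using strongly_convex_on_quadratic_growth[OF sc_x[OF \<open>ys \<in> Y\<close>] \<open>convex X\<close> \<open>muX > 0\<close> \<open>xs \<in> X\<close>]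
        that saddle[OF _ \<open>ys \<in> Y\<close>] by simp
  qed (use \<open>compact Y\<close> \<open>muX > 0\<close> \<open>xs \<in> X\<close> in \<open>auto simp: compact_imp_bounded
         intro!: LYX bounded_linear_sub bounded_linear_grad_y D_lin\<close>)
qed

end
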